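(* Let $G$ be a graph with no induced $P_7$, $C_4$, $C_6$ or $C_7$, and let $H=(B_1,\dots,B_5)$ be a nice blowup of $C_5$ in $G$. For every $v\in V(G)\setminus V(H)$, the set $\operatorname{supp}(v)$ consists of consecutive integers modulo $5$ and has size in $\{0,1,2,3,5\}$.
   Context: Indices modulo $5$. A nice blowup of $C_5$ is a tuple $(B_1,\dots,B_5)$ of pairwise disjoint cliques such that every vertex of $B_i$ has a neighbor in $B_{i-1}$ and in $B_{i+1}$, $B_i$ is anticomplete to $B_{i+2}$, and there are no $a\in B_i$, distinct $b,c\in B_{i+1}$, $d\in B_{i+2}$ with $G[\{a,b,c,d\}]\cong P_4$. $V(H)=B_1\cup\dots\cup B_5$. For $v\notin V(H)$, $\operatorname{supp}(v)=\{i\in\{1,\dots,5\}: v \text{ has a neighbor in } B_i\}$. *)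

theory Defs
  imports Main
begin

definition is_graph :: "'a set \<Rightarrow> ('a \<Rightarrow> 'a \<Rightarrow> bool) \<Rightarrow> bool" where
  "is_graph V E \<longleftrightarrow> finite V \<and> (\<forall>x y. E x y \<longrightarrow> E y x) \<and> (\<forall>x. \<not> E x x)
     \<and> (\<forall>x y. E x y \<longrightarrow> x \<in> V \<and> y \<in> V)"

definition induced_path :: "('a \<Rightarrow> 'a \<Rightarrow> bool) \<Rightarrow> 'a list \<Rightarrow> bool" where
  "induced_path E xs \<longleftrightarrow> distinct xs \<and>
     (\<forall>i<length xs. \<forall>j<length xs. E (xs!i) (xs!j) \<longleftrightarrow> (i + 1 = j \<or> j + 1 = i))"

definition induced_cycle :: "('a \<Rightarrow> 'a \<Rightarrow> bool) \<Rightarrow> 'a list \<Rightarrow> bool" where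
  "induced_cycle E xs \<longleftrightarrow> distinct xs \<and> length xs \<ge> 3 \<and>
     (\<forall>i<length xs. \<forall>j<length xs. E (xs!i) (xs!j) \<longleftrightarrow>
        ((i + 1) mod length xs = j \<or> (j + 1) mod length xs = i))"

definition has_induced_P :: "'a set \<Rightarrow> ('a \<Rightarrow> 'a \<Rightarrow> bool) \<Rightarrow> nat \<Rightarrow> bool" where
  "has_induced_P V E k \<longleftrightarrow> (\<exists>xs. set xs \<subseteq> V \<and> length xs = k \<and> induced_path E xs)"

definition has_induced_C :: "'a set \<Rightarrow> ('a \<Rightarrow> 'a \<Rightarrow> bool) \<Rightarrow> nat \<Rightarrow> bool" where
  "has_induced_C V E k \<longleftrightarrow> (\<exists>xs. set xs \<subseteq> V \<and> length xs = k \<and> induced_cycle E xs)"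

definition induces_P4 :: "('a \<Rightarrow> 'a \<Rightarrow> bool) \<Rightarrow> 'a set \<Rightarrow> bool" where
  "induces_P4 E S \<longleftrightarrow> (\<exists>xs. set xs = S \<and> length xs = 4 \<and> induced_path E xs)"

definition clique :: "('a \<Rightarrow> 'a \<Rightarrow> bool) \<Rightarrow> 'a set \<Rightarrow> bool" where
  "clique E S \<longleftrightarrow> (\<forall>x\<in>S. \<forall>y\<in>S. x \<noteq> y \<longrightarrow> E x y)"

text \<open>Nice blowup of C5; the bags are indexed by 0..4 (modulo 5), i.e. B i stands for B_{i+1}.\<close>
definition nice_blowup_C5 :: "'a set \<Rightarrow> ('a \<Rightarrow> 'a \<Rightarrow> bool) \<Rightarrow> (nat \<Rightarrow> 'a set) \<Rightarrow> bool" where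
  "nice_blowup_C5 V E B \<longleftrightarrow>
     (\<forall>i<5. B i \<subseteq> V \<and> clique E (B i)) \<and>
     (\<forall>i<5. \<forall>j<5. i \<noteq> j \<longrightarrow> B i \<inter> B j = {}) \<and>
     (\<forall>i<5. \<forall>v\<in>B i. (\<exists>u\<in>B ((i + 4) mod 5). E v u) \<and> (\<exists>u\<in>B ((i + 1) mod 5). E v u)) \<and>
     (\<forall>i<5. \<forall>x\<in>B i. \<forall>y\<in>B ((i + 2) mod 5). \<not> E x y) \<and>
     (\<forall>i<5. \<forall>a\<in>B i. \<forall>b\<in>B ((i + 1) mod 5). \<forall>c\<in>B ((i + 1) mod 5). \<forall>d\<in>B ((i + 2) mod 5).
        b \<noteq> c \<longrightarrow> \<not> induces_P4 E {a, b, c, d})"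

definition VH :: "(nat \<Rightarrow> 'a set) \<Rightarrow> 'a set" where
  "VH B = (\<Union>i<5. B i)"

definition supp :: "('a \<Rightarrow> 'a \<Rightarrow> bool) \<Rightarrow> (nat \<Rightarrow> 'a set) \<Rightarrow> 'a \<Rightarrow> nat set" where
  "supp E B v = {i. i < 5 \<and> (\<exists>u\<in>B i. E v u)}"

definition consecutive_mod5 :: "nat set \<Rightarrow> bool" where
  "consecutive_mod5 S \<longleftrightarrow> (\<exists>s k. k \<le> 5 \<and> S = {(s + j) mod 5 | j. j < k})"

end

theory Submission
  imports Defs
begin

text \<open>If \<open>v\<close> had neighbours \<open>a \<in> B\<^sub>i\<close> and \<open>c \<in> B\<^sub>i\<^sub>+\<^sub>2\<close> but none in \<open>B\<^sub>i\<^sub>+\<^sub>1\<close>, pick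
  \<open>b \<in> B\<^sub>i\<^sub>+\<^sub>1\<close> adjacent to \<open>a\<close> and \<open>b' \<in> B\<^sub>i\<^sub>+\<^sub>1\<close> adjacent to \<open>c\<close>. If \<open>a b'\<close> or \<open>b c\<close> is an
  edge, \<open>v\<close> closes an induced \<open>C\<^sub>4\<close>; otherwise \<open>b \<noteq> b'\<close> and \<open>a b b' c\<close> is an induced \<open>P\<^sub>4\<close> of the
  kind a nice blowup forbids. So the support of \<open>v\<close> is a subset of \<open>\<int>/5\<close> that contains \<open>i + 1\<close>
  whenever it contains \<open>i\<close> and \<open>i + 2\<close>, and a finite check shows that such subsets are exactly
  the arcs of length 0, 1, 2, 3 and 5.\<close>

lemma less_5_cases: "i < 5 \<Longrightarrow> i = 0 \<or> i = 1 \<or> i = 2 \<or> i = 3 \<or> i = (4::nat)"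
  by linarith

lemma mod5_consecutive_distinct:
  assumes "i < 5"
  shows "i \<noteq> (i + 1) mod (5::nat) \<and> (i + 1) mod 5 \<noteq> (i + 2) mod 5 \<and> i \<noteq> (i + 2) mod 5"
  using less_5_cases[OF assms] by auto

lemma all_less_5: "(\<forall>x<5. P x) \<longleftrightarrow> P 0 \<and> P 1 \<and> P 2 \<and> P 3 \<and> P (4::nat)"
  using less_5_cases by auto

lemma ex_less_5: "(\<exists>x<5. P x) \<longleftrightarrow> P 0 \<or> P 1 \<or> P 2 \<or> P 3 \<or> P (4::nat)"
  using all_less_5[of "\<lambda>x. \<not> P x"] by blast

lemma inj_on_add_mod: "inj_on (\<lambda>j. (s + j) mod n) {..<n :: nat}"
proof (rule inj_onI)
  fix i j assume i: "i \<in> {..<n}" and j: "j \<in> {..<n}" and eq: "(s + i) mod n = (s + j) mod n"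
  have "n dvd nat \<bar>int i - int j\<bar>"
    using eq unfolding mod_eq_iff_dvd_symdiff_nat by simp
  moreover have "nat \<bar>int i - int j\<bar> < n"
    using i j by (auto simp: nat_less_iff abs_less_iff)
  ultimately have "nat \<bar>int i - int j\<bar> = 0"
    using nat_dvd_not_less by (meson gr0I)
  then show "i = j"
    by simp
qed

definition arc :: "nat \<Rightarrow> nat \<Rightarrow> nat set" where
  "arc s k = (\<lambda>j. (s + j) mod 5) ` {..<k}"

lemma mem_arc_iff:
  assumes "x < 5" "s < 5" "k \<le> 5"
  shows "x \<in> arc s k \<longleftrightarrow> (x + 5 - s) mod 5 < k"
proof -
  define j\<^sub>0 where "j\<^sub>0 = (x + 5 - s) mod 5"
  have "(s + j\<^sub>0) mod 5 = (s + (x + 5 - s)) mod 5"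
    unfolding j\<^sub>0_def by (rule mod_add_right_eq)
  also have "\<dots> = (x + 5) mod 5"
    using assms(2) by simp
  also have "\<dots> = x"
    using assms(1) by simp
  finally have j\<^sub>0: "(s + j\<^sub>0) mod 5 = x" .
  show ?thesis
    unfolding j\<^sub>0_def[symmetric]
  proof
    assume "x \<in> arc s k"
    then obtain j where "j < k" "(s + j) mod 5 = x"
      by (auto simp: arc_def)
    then have "j = j\<^sub>0"
      using inj_onD[OF inj_on_add_mod, of s j 5 j\<^sub>0] j\<^sub>0 assms(3) by (simp add: j\<^sub>0_def)
    then show "j\<^sub>0 < k"
      using \<open>j < k\<close> by simp
  next
    assume "j\<^sub>0 < k"
    then show "x \<in> arc s k"
      using j\<^sub>0 unfolding arc_def by force
  qed
qed

lemma arc_subset: "arc s k \<subseteq> {..<5}"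
  by (auto simp: arc_def)

lemma consecutive_mod5_arc: "k \<le> 5 \<Longrightarrow> consecutive_mod5 (arc s k)"
  unfolding consecutive_mod5_def arc_def by blast

lemma card_arc: "k \<le> 5 \<Longrightarrow> card (arc s k) = k"
  unfolding arc_def by (simp add: card_image inj_on_subset[OF inj_on_add_mod])

lemma gap_filled_mod5_is_arc:
  assumes "S \<subseteq> {..<5}"
    and gap_filled: "\<forall>i<5. i \<in> S \<longrightarrow> (i + 2) mod 5 \<in> S \<longrightarrow> (i + 1) mod 5 \<in> S"
  shows "\<exists>s k. k \<in> {0, 1, 2, 3, 5} \<and> S = arc s k"
proof -
  have "\<exists>s<5. \<exists>k\<in>{0, 1, 2, 3, 5}. \<forall>x<5. x \<in> S \<longleftrightarrow> (x + 5 - s) mod 5 < k"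
    using gap_filled unfolding all_less_5 ex_less_5
    \<comment> \<open>\<open>simp\<close> turns \<open>0 + 2\<close> into \<open>Suc (Suc 0)\<close>; \<open>numeral_2_eq_2\<close> keeps the literal \<open>2\<close> in step\<close>
    by (cases "0 \<in> S"; cases "1 \<in> S"; cases "2 \<in> S"; cases "3 \<in> S"; cases "4 \<in> S";
        simp add: numeral_2_eq_2)
  then obtain s k where "s < 5" "k \<in> {0, 1, 2, 3, 5}"
    and S_eq: "\<forall>x<5. x \<in> S \<longleftrightarrow> (x + 5 - s) mod 5 < k"
    by blast
  then have "k \<le> 5"
    by auto
  then have "\<forall>x<5. x \<in> S \<longleftrightarrow> x \<in> arc s k"
    using mem_arc_iff[OF _ \<open>s < 5\<close>] S_eq by simp
  then have "S = arc s k"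
    using assms(1) arc_subset by blast
  with \<open>k \<in> {0, 1, 2, 3, 5}\<close> show ?thesis
    by blast
qed

lemma all_less_4: "(\<forall>x<4. P x) \<longleftrightarrow> P 0 \<and> P 1 \<and> P 2 \<and> P (3::nat)"
  by (auto simp: less_Suc_eq numeral_eq_Suc)

lemma induced_cycle_4I:
  assumes "symp E" "irreflp E" "distinct [a, b, c, d]"
    and "E a b" "E b c" "E c d" "E d a" "\<not> E a c" "\<not> E b d"
  shows "induced_cycle E [a, b, c, d]"
proof -
  have "length [a, b, c, d] = 4"
    by simp
  with assms show ?thesis
    unfolding induced_cycle_def symp_def irreflp_def \<open>length [a, b, c, d] = 4\<close> all_less_4
    by simp blast
qed

lemma induced_path_4I:
  assumes "symp E" "irreflp E" "distinct [a, b, c, d]"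
    and "E a b" "E b c" "E c d" "\<not> E a c" "\<not> E b d" "\<not> E a d"
  shows "induced_path E [a, b, c, d]"
proof -
  have "length [a, b, c, d] = 4"
    by simp
  with assms show ?thesis
    unfolding induced_path_def symp_def irreflp_def \<open>length [a, b, c, d] = 4\<close> all_less_4
    by simp blast
qed

lemma is_graph_symp: "is_graph V E \<Longrightarrow> symp E"
  by (simp add: is_graph_def symp_def)

lemma is_graph_irreflp: "is_graph V E \<Longrightarrow> irreflp E"
  by (simp add: is_graph_def irreflp_def)

lemma has_induced_C_4I:
  assumes "is_graph V E" "set [a, b, c, d] \<subseteq> V" "distinct [a, b, c, d]"
    and "E a b" "E b c" "E c d" "E d a" "\<not> E a c" "\<not> E b d"
  shows "has_induced_C V E 4"
  unfolding has_induced_C_def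
  using assms induced_cycle_4I[OF is_graph_symp is_graph_irreflp]
  by (intro exI[of _ "[a, b, c, d]"]) simp

lemma induces_P4I:
  assumes "is_graph V E" "distinct [a, b, c, d]"
    and "E a b" "E b c" "E c d" "\<not> E a c" "\<not> E b d" "\<not> E a d"
  shows "induces_P4 E {a, b, c, d}"
  unfolding induces_P4_def
  using assms induced_path_4I[OF is_graph_symp is_graph_irreflp]
  by (intro exI[of _ "[a, b, c, d]"]) simp

lemma notin_VH_consecutive_bags:
  "v \<notin> VH B \<Longrightarrow> p < 5 \<Longrightarrow> v \<notin> B p \<and> v \<notin> B ((p + 1) mod 5) \<and> v \<notin> B ((p + 2) mod 5)"
  unfolding VH_def by simp

context
  fixes V :: "'a set" and E :: "'a \<Rightarrow> 'a \<Rightarrow> bool" and B :: "nat \<Rightarrow> 'a set"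
  assumes nice: "nice_blowup_C5 V E B"
begin

lemma nice_blowup_C5_in_V: "p < 5 \<Longrightarrow> x \<in> B p \<Longrightarrow> x \<in> V"
  using nice unfolding nice_blowup_C5_def by blast

lemma nice_blowup_C5_bag_clique: "p < 5 \<Longrightarrow> clique E (B p)"
  using nice unfolding nice_blowup_C5_def by blast

lemma nice_blowup_C5_bags_disjoint:
  "p < 5 \<Longrightarrow> q < 5 \<Longrightarrow> p \<noteq> q \<Longrightarrow> x \<in> B p \<Longrightarrow> y \<in> B q \<Longrightarrow> x \<noteq> y"
  using nice unfolding nice_blowup_C5_def by blast

lemma nice_blowup_C5_consecutive_bags_distinct:
  assumes "p < 5"
  shows "x \<in> B p \<Longrightarrow> y \<in> B ((p + 1) mod 5) \<Longrightarrow> x \<noteq> y"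
    and "x \<in> B p \<Longrightarrow> y \<in> B ((p + 2) mod 5) \<Longrightarrow> x \<noteq> y"
    and "x \<in> B ((p + 1) mod 5) \<Longrightarrow> y \<in> B ((p + 2) mod 5) \<Longrightarrow> x \<noteq> y"
  using nice_blowup_C5_bags_disjoint[of p "(p + 1) mod 5"] nice_blowup_C5_bags_disjoint[of p "(p + 2) mod 5"]
    nice_blowup_C5_bags_disjoint[of "(p + 1) mod 5" "(p + 2) mod 5"] mod5_consecutive_distinct[OF assms] assms
  by simp_all

lemma nice_blowup_C5_pred_neighbour: "p < 5 \<Longrightarrow> x \<in> B p \<Longrightarrow> \<exists>y\<in>B ((p + 4) mod 5). E x y"
  using nice unfolding nice_blowup_C5_def by blast

lemma nice_blowup_C5_succ_neighbour: "p < 5 \<Longrightarrow> x \<in> B p \<Longrightarrow> \<exists>y\<in>B ((p + 1) mod 5). E x y"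
  using nice unfolding nice_blowup_C5_def by blast

lemma nice_blowup_C5_anticomplete: "p < 5 \<Longrightarrow> x \<in> B p \<Longrightarrow> y \<in> B ((p + 2) mod 5) \<Longrightarrow> \<not> E x y"
  using nice unfolding nice_blowup_C5_def by blast

lemma nice_blowup_C5_no_P4:
  "p < 5 \<Longrightarrow> a \<in> B p \<Longrightarrow> b \<in> B ((p + 1) mod 5) \<Longrightarrow> b' \<in> B ((p + 1) mod 5) \<Longrightarrow>
    c \<in> B ((p + 2) mod 5) \<Longrightarrow> b \<noteq> b' \<Longrightarrow> \<not> induces_P4 E {a, b, b', c}"
  using nice unfolding nice_blowup_C5_def by blast

lemma no_C4_through_middle_bag:
  assumes G: "is_graph V E" and no_C4: "\<not> has_induced_C V E 4"
    and v: "v \<in> V" "v \<notin> VH B" and i: "i < 5"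
    and a: "a \<in> B i" "E v a" and c: "c \<in> B ((i + 2) mod 5)" "E v c"
    and x: "x \<in> B ((i + 1) mod 5)" "\<not> E v x"
  shows "\<not> (E a x \<and> E x c)"
proof
  assume ax_xc: "E a x \<and> E x c"
  have "set [v, a, x, c] \<subseteq> V"
    using nice_blowup_C5_in_V[OF i a(1)] nice_blowup_C5_in_V[OF _ x(1)] nice_blowup_C5_in_V[OF _ c(1)] v(1)
    by simp
  moreover have "distinct [v, a, x, c]"
    using nice_blowup_C5_consecutive_bags_distinct[OF i] notin_VH_consecutive_bags[OF v(2) i] a(1) x(1) c(1)
    by auto
  moreover have "\<not> E a c"
    using nice_blowup_C5_anticomplete i a(1) c(1) by blast
  moreover have "E c v"
    using is_graph_symp[OF G] c(2) by (rule sympD)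
  ultimately show False
    using has_induced_C_4I[OF G _ _ a(2) _ _ _ x(2)] ax_xc no_C4 by blast
qed

lemma supp_gap_filled:
  assumes G: "is_graph V E" and no_C4: "\<not> has_induced_C V E 4"
    and v: "v \<in> V" "v \<notin> VH B"
    and i: "i < 5" and "i \<in> supp E B v" "(i + 2) mod 5 \<in> supp E B v"
  shows "(i + 1) mod 5 \<in> supp E B v"
proof (rule ccontr)
  assume "(i + 1) mod 5 \<notin> supp E B v"
  then have no_vb: "\<not> E v b" if "b \<in> B ((i + 1) mod 5)" for b
    using that unfolding supp_def by auto
  obtain a c where a: "a \<in> B i" "E v a" and c: "c \<in> B ((i + 2) mod 5)" "E v c"
    using assms(6,7) unfolding supp_def by auto
  obtain b where b: "b \<in> B ((i + 1) mod 5)" "E a b"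
    using nice_blowup_C5_succ_neighbour[OF i a(1)] by blast
  have "((i + 2) mod 5 + 4) mod 5 = (i + 1) mod 5"
    using less_5_cases[OF i] by auto
  then obtain b' where b': "b' \<in> B ((i + 1) mod 5)" "E c b'"
    using nice_blowup_C5_pred_neighbour[of "(i + 2) mod 5" c] c(1) by auto
  have "E b' c"
    using is_graph_symp[OF G] b'(2) by (rule sympD)
  have "\<not> E a b'" "\<not> E b c"
    using no_C4_through_middle_bag[OF G no_C4 v i a c] b b'(1) \<open>E b' c\<close> no_vb by blast+
  then have "b \<noteq> b'"
    using b b' by auto
  have "distinct [a, b, b', c]"
    using nice_blowup_C5_consecutive_bags_distinct[OF i] a(1) b(1) b'(1) c(1) \<open>b \<noteq> b'\<close> by auto
  moreover have "E b b'"
    using nice_blowup_C5_bag_clique[of "(i + 1) mod 5"] b(1) b'(1) \<open>b \<noteq> b'\<close> unfolding clique_def by simp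
  moreover have "\<not> E a c"
    using nice_blowup_C5_anticomplete i a(1) c(1) by blast
  ultimately have "induces_P4 E {a, b, b', c}"
    using induces_P4I[OF G _ b(2) _ \<open>E b' c\<close>] \<open>\<not> E a b'\<close> \<open>\<not> E b c\<close> by blast
  then show False
    using nice_blowup_C5_no_P4 i a(1) b(1) b'(1) c(1) \<open>b \<noteq> b'\<close> by blast
qed

end

theorem lemma4p2:
  fixes V :: "'a set" and E :: "'a \<Rightarrow> 'a \<Rightarrow> bool" and B :: "nat \<Rightarrow> 'a set" and v :: 'a
  assumes "is_graph V E"
    and "\<not> has_induced_P V E 7"
    and "\<not> has_induced_C V E 4"
    and "\<not> has_induced_C V E 6"
    and "\<not> has_induced_C V E 7"
    and "nice_blowup_C5 V E B"
    and "v \<in> V" and "v \<notin> VH B"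
  shows "consecutive_mod5 (supp E B v) \<and> card (supp E B v) \<in> {0, 1, 2, 3, 5}"
proof -
  have "supp E B v \<subseteq> {..<5}"
    by (auto simp: supp_def)
  moreover have "\<forall>i<5. i \<in> supp E B v \<longrightarrow> (i + 2) mod 5 \<in> supp E B v \<longrightarrow> (i + 1) mod 5 \<in> supp E B v"
    by (intro allI impI) (rule supp_gap_filled[OF assms(6,1,3,7,8)])
  ultimately have "\<exists>s k. k \<in> {0, 1, 2, 3, 5} \<and> supp E B v = arc s k"
    by (rule gap_filled_mod5_is_arc)
  then obtain s k where k: "k \<in> {0, 1, 2, 3, 5}" and supp_arc: "supp E B v = arc s k"
    by blast
  then have "k \<le> 5"
    by auto
  then show ?thesis
    unfolding supp_arc using consecutive_mod5_arc card_arc k by simp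
qed

end
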